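(* Let $(\mathcal{G},\underline{a})$ be a compact metric graph (i.e. $\mathcal{E}=\emptyset$) and let $P$ be an orthogonal projector in $\mathcal{K}$, $P^\perp=1-P$. If $\operatorname{Ker}\bigl(P^\perp M(0,\underline{a})P^\perp+P\bigr)=\{0\}$, then there exists a constant $C=C(P,\underline{a})>0$ such that $$\|u'\|_{\mathcal{H}}\ge C\|u\|_{\mathcal{H}}\qquad\text{for all } u\in\mathcal{W}_P=\{\phi\in\mathcal{W}\mid P\underline{\phi}=0\}.$$
   Context: A compact finite metric graph consists of finitely many vertices and a finite set $\mathcal{I}$ of internal edges, each identified with an interval $[0,a_i]$, $a_i>0$; $\underline{a}=\{a_i\}_{i\in\mathcal{I}}$. The Hilbert space is $\mathcal{H}=\bigoplus_{i\in\mathcal I}L^2(0,a_i)$, and $\mathcal{W}=\bigoplus_i\mathcal{W}_i$, where $\mathcal{W}_i$ is the set of absolutely continuous $\psi_i\in L^2(0,a_i)$ with $\psi_i'\in L^2(0,a_i)$; $u'$ denotes the edgewise derivative. Let $\mathcal{K}=\mathcal{K}_{\mathcal{I}}^-\oplus\mathcal{K}_{\mathcal{I}}^+$ with $\mathcal{K}_{\mathcal{I}}^\pm\cong\mathbb{C}^{|\mathcal{I}|}$, and for $\phi\in\mathcal{W}$ let $\underline{\phi}=(\{\phi_i(0)\}_{i\in\mathcal{I}},\{\phi_i(a_i)\}_{i\in\mathcal{I}})\in\mathcal{K}$. With respect to this decomposition $M(0,\underline{a})=\begin{bmatrix}-\frac{1}{\underline{a}}&\frac{1}{\underline{a}}\\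 \frac{1}{\underline{a}}&-\frac{1}{\underline{a}}\end{bmatrix}$, where $\frac1{\underline a}$ is the diagonal matrix with entries $1/a_i$. *)

theory Defs
  imports "HOL-Analysis.Analysis"
begin

definition abs_continuous_on :: "real set \<Rightarrow> (real \<Rightarrow> 'b::real_normed_vector) \<Rightarrow> bool" where
  "abs_continuous_on S f \<longleftrightarrow>
     (\<forall>\<epsilon>>0. \<exists>\<delta>>0. \<forall>(n::nat) (x::nat \<Rightarrow> real) (y::nat \<Rightarrow> real).
        (\<forall>k<n. x k \<le> y k \<and> {x k..y k} \<subseteq> S) \<and>
        (\<forall>k<n. \<forall>l<n. k \<noteq> l \<longrightarrow> y k \<le> x l \<or> y l \<le> x k) \<and>
        (\<Sum>k<n. y k - x k) < \<delta>
        \<longrightarrow> (\<Sum>k<n. norm (f (y k) - f (x k))) < \<epsilon>)"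

definition L2_on :: "real set \<Rightarrow> (real \<Rightarrow> complex) \<Rightarrow> bool" where
  "L2_on S g \<longleftrightarrow> g \<in> borel_measurable (lebesgue_on S) \<and>
                  integrable (lebesgue_on S) (\<lambda>x. (cmod (g x))\<^sup>2)"

text \<open>Edge space W_i: psi absolutely continuous on [0,a], with an a.e. derivative g in L^2(0,a).
  "edge_W a psi g" says psi is in W_i and g is (a representative of) psi'.\<close>
definition edge_W :: "real \<Rightarrow> (real \<Rightarrow> complex) \<Rightarrow> (real \<Rightarrow> complex) \<Rightarrow> bool" where
  "edge_W a psi g \<longleftrightarrow> abs_continuous_on {0..a} psi \<and> L2_on {0..a} g \<and>
     (AE x in lebesgue_on {0..a}. (psi has_vector_derivative g x) (at x within {0..a}))"

definition H_norm :: "('i::finite \<Rightarrow> real) \<Rightarrow> ('i \<Rightarrow> real \<Rightarrow> complex) \<Rightarrow> real" where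
  "H_norm a u = sqrt (\<Sum>i\<in>UNIV. integral\<^sup>L (lebesgue_on {0..a i}) (\<lambda>x. (cmod (u i x))\<^sup>2))"

text \<open>Boundary values: K = K^- (+) K^+, Inl i = value at 0, Inr i = value at a_i.\<close>
definition bdry :: "('i::finite \<Rightarrow> real) \<Rightarrow> ('i \<Rightarrow> real \<Rightarrow> complex) \<Rightarrow> complex ^ ('i + 'i)" where
  "bdry a u = (\<chi> k. case k of Inl i \<Rightarrow> u i 0 | Inr i \<Rightarrow> u i (a i))"

definition M0 :: "('i::finite \<Rightarrow> real) \<Rightarrow> complex ^ ('i + 'i) ^ ('i + 'i)" where
  "M0 a = (\<chi> k l. case (k, l) of
      (Inl i, Inl j) \<Rightarrow> (if i = j then - complex_of_real (1 / a i) else 0)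
    | (Inl i, Inr j) \<Rightarrow> (if i = j then complex_of_real (1 / a i) else 0)
    | (Inr i, Inl j) \<Rightarrow> (if i = j then complex_of_real (1 / a i) else 0)
    | (Inr i, Inr j) \<Rightarrow> (if i = j then - complex_of_real (1 / a i) else 0))"

definition orth_projector :: "complex ^ 'n ^ 'n \<Rightarrow> bool" where
  "orth_projector P \<longleftrightarrow> P ** P = P \<and> (\<forall>k l. P $ k $ l = cnj (P $ l $ k))"

end

theory Submission
  imports Defs
begin

text \<open>Split the boundary vector of \<open>u\<close> as \<open>v + d\<close>, where \<open>v\<close> repeats \<open>u\<^sub>i(0)\<close> at both
  ends of edge \<open>i\<close> and \<open>d\<close> records the increments \<open>u\<^sub>i(a\<^sub>i) - u\<^sub>i(0)\<close>. Since \<open>M(0,a)\<close>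
  annihilates \<open>v\<close>, the condition \<open>P(v + d) = 0\<close> turns \<open>(P\<^sup>\<bottom>MP\<^sup>\<bottom> + P) v\<close> into
  \<open>(P\<^sup>\<bottom>MP - P) d\<close>, and injectivity of the former bounds the values \<open>u\<^sub>i(0)\<close> by the increments.
  Every oscillation of \<open>u\<^sub>i\<close> is at most \<open>\<parallel>u\<^sub>i'\<parallel>\<^sub>1 \<le> \<surd>(\<Sum>a) \<parallel>u'\<parallel>\<close>, by the fundamental theorem of
  calculus for absolutely continuous functions (obtained from the Lusin N-property and the area
  formula) and Cauchy--Schwarz. Hence \<open>u\<close> is uniformly bounded by a multiple of \<open>\<parallel>u'\<parallel>\<close>, and so
  is \<open>\<parallel>u\<parallel>\<close>.\<close>

section \<open>Absolutely continuous functions\<close>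

lemma abs_continuous_on_finite_family:
  assumes "abs_continuous_on S f" and "e > 0"
  obtains d where "d > 0"
    and "\<And>F l r. finite F \<Longrightarrow> \<forall>C\<in>F. l C \<le> r C \<and> {l C..r C} \<subseteq> S \<Longrightarrow>
           \<forall>C\<in>F. \<forall>C'\<in>F. C \<noteq> C' \<longrightarrow> r C \<le> l C' \<or> r C' \<le> l C \<Longrightarrow>
           (\<Sum>C\<in>F. r C - l C) < d \<Longrightarrow> (\<Sum>C\<in>F. norm (f (r C) - f (l C))) < e"
proof -
  obtain d where "d > 0" and d: "\<And>n (x::nat\<Rightarrow>real) y.
        (\<forall>k<n. x k \<le> y k \<and> {x k..y k} \<subseteq> S) \<and>
        (\<forall>k<n. \<forall>k'<n. k \<noteq> k' \<longrightarrow> y k \<le> x k' \<or> y k' \<le> x k) \<and> (\<Sum>k<n. y k - x k) < d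
        \<Longrightarrow> (\<Sum>k<n. norm (f (y k) - f (x k))) < e"
    using assms unfolding abs_continuous_on_def by blast
  show thesis
  proof (rule that[OF \<open>d > 0\<close>])
    fix F and l r :: "_ \<Rightarrow> real"
    assume F: "finite F" and lr: "\<forall>C\<in>F. l C \<le> r C \<and> {l C..r C} \<subseteq> S"
      and ord: "\<forall>C\<in>F. \<forall>C'\<in>F. C \<noteq> C' \<longrightarrow> r C \<le> l C' \<or> r C' \<le> l C"
      and len: "(\<Sum>C\<in>F. r C - l C) < d"
    define g where "g = from_nat_into F"
    have g: "bij_betw g {..<card F} F"
      unfolding g_def by (rule bij_betw_from_nat_into_finite[OF F])
    then have gF: "k < card F \<Longrightarrow> g k \<in> F" for k by (auto simp: bij_betw_def)
    have ginj: "k < card F \<Longrightarrow> k' < card F \<Longrightarrow> k \<noteq> k' \<Longrightarrow> g k \<noteq> g k'" for k k'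
      using g by (auto simp: bij_betw_def inj_on_def)
    have "(\<Sum>k<card F. r (g k) - l (g k)) < d"
      using len by (simp add: sum.reindex_bij_betw[OF g, of "\<lambda>C. r C - l C"])
    then have "(\<Sum>k<card F. norm (f (r (g k)) - f (l (g k)))) < e"
      using lr ord gF ginj by (intro d conjI allI impI) auto
    then show "(\<Sum>C\<in>F. norm (f (r C) - f (l C))) < e"
      by (simp add: sum.reindex_bij_betw[OF g, of "\<lambda>C. norm (f (r C) - f (l C))"])
  qed
qed

lemma abs_continuous_on_imp_continuous_on:
  assumes "abs_continuous_on S f" and "is_interval S"
  shows "continuous_on S f"
  unfolding continuous_on_iff
proof (intro ballI allI impI)
  fix x e :: real assume x: "x \<in> S" and "e > 0"
  obtain d where "d > 0" and d: "\<And>n (x::nat\<Rightarrow>real) y.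
        (\<forall>k<n. x k \<le> y k \<and> {x k..y k} \<subseteq> S) \<and>
        (\<forall>k<n. \<forall>k'<n. k \<noteq> k' \<longrightarrow> y k \<le> x k' \<or> y k' \<le> x k) \<and> (\<Sum>k<n. y k - x k) < d
        \<Longrightarrow> (\<Sum>k<n. norm (f (y k) - f (x k))) < e"
    using assms(1) \<open>e > 0\<close> unfolding abs_continuous_on_def by blast
  show "\<exists>d>0. \<forall>y\<in>S. dist y x < d \<longrightarrow> dist (f y) (f x) < e"
  proof (intro exI[of _ d] conjI ballI impI \<open>d > 0\<close>)
    fix y assume y: "y \<in> S" "dist y x < d"
    have "{min x y..max x y} \<subseteq> S"
      using assms(2) x y(1) unfolding is_interval_1 by (metis atLeastAtMost_iff min_def max_def subsetI)
    moreover have "max x y - min x y < d"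
      using y(2) by (auto simp: dist_real_def max_def min_def)
    ultimately have "norm (f (max x y) - f (min x y)) < e"
      using d[of 1 "\<lambda>_. min x y" "\<lambda>_. max x y"] by simp
    then show "dist (f y) (f x) < e"
      by (cases "x \<le> y") (auto simp: dist_norm norm_minus_commute max_def min_def)
  qed
qed

lemma abs_continuous_on_compose_bounded_linear:
  assumes "abs_continuous_on S f" and "bounded_linear g"
  shows "abs_continuous_on S (\<lambda>t. g (f t))"
  unfolding abs_continuous_on_def
proof (intro allI impI)
  fix e :: real assume "e > 0"
  obtain K where "K > 0" and K: "\<And>x. norm (g x) \<le> norm x * K"
    using bounded_linear.pos_bounded[OF assms(2)] by blast
  have "e / K > 0" using \<open>e > 0\<close> \<open>K > 0\<close> by simp
  then obtain d where "d > 0" and d: "\<And>n (x::nat\<Rightarrow>real) y.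
        (\<forall>k<n. x k \<le> y k \<and> {x k..y k} \<subseteq> S) \<and>
        (\<forall>k<n. \<forall>k'<n. k \<noteq> k' \<longrightarrow> y k \<le> x k' \<or> y k' \<le> x k) \<and> (\<Sum>k<n. y k - x k) < d
        \<Longrightarrow> (\<Sum>k<n. norm (f (y k) - f (x k))) < e / K"
    using assms(1) unfolding abs_continuous_on_def by blast
  show "\<exists>d>0. \<forall>n (x::nat\<Rightarrow>real) y. (\<forall>k<n. x k \<le> y k \<and> {x k..y k} \<subseteq> S) \<and>
        (\<forall>k<n. \<forall>k'<n. k \<noteq> k' \<longrightarrow> y k \<le> x k' \<or> y k' \<le> x k) \<and> (\<Sum>k<n. y k - x k) < d \<longrightarrow>
        (\<Sum>k<n. norm (g (f (y k)) - g (f (x k)))) < e"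
  proof (intro exI[of _ d] conjI allI impI \<open>d > 0\<close>)
    fix n and x y :: "nat \<Rightarrow> real"
    assume "(\<forall>k<n. x k \<le> y k \<and> {x k..y k} \<subseteq> S) \<and>
        (\<forall>k<n. \<forall>k'<n. k \<noteq> k' \<longrightarrow> y k \<le> x k' \<or> y k' \<le> x k) \<and> (\<Sum>k<n. y k - x k) < d"
    then have small: "(\<Sum>k<n. norm (f (y k) - f (x k))) * K < e"
      using d \<open>K > 0\<close> by (simp add: pos_less_divide_eq)
    have "(\<Sum>k<n. norm (g (f (y k)) - g (f (x k)))) \<le> (\<Sum>k<n. norm (f (y k) - f (x k)) * K)"
      using K by (intro sum_mono) (simp flip: linear_diff[OF bounded_linear.linear[OF assms(2)]])
    also have "\<dots> < e" using small by (simp add: sum_distrib_right)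
    finally show "(\<Sum>k<n. norm (g (f (y k)) - g (f (x k)))) < e" .
  qed
qed

section \<open>Lusin's N-property\<close>

lemma open_connected_real_eq_Ioo:
  fixes C :: "real set"
  assumes "open C" and "connected C" and "C \<noteq> {}" and "bounded C"
  shows "C = {Inf C<..<Sup C}"
proof
  have ba: "bdd_above C" and bb: "bdd_below C"
    using \<open>bounded C\<close> by (auto intro: bounded_imp_bdd_above bounded_imp_bdd_below)
  show "C \<subseteq> {Inf C<..<Sup C}"
  proof
    fix x assume "x \<in> C"
    then obtain e where "e > 0" "ball x e \<subseteq> C" using \<open>open C\<close> openE by blast
    then have "x - e/2 \<in> C" "x + e/2 \<in> C" by (auto simp: dist_real_def subset_iff)
    then have "Inf C \<le> x - e/2" "x + e/2 \<le> Sup C"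
      using cInf_lower[OF _ bb] cSup_upper[OF _ ba] by auto
    then show "x \<in> {Inf C<..<Sup C}" using \<open>e > 0\<close> by auto
  qed
  show "{Inf C<..<Sup C} \<subseteq> C"
  proof
    fix x assume x: "x \<in> {Inf C<..<Sup C}"
    obtain y where "y \<in> C" "y < x" using cInf_lessD[OF \<open>C \<noteq> {}\<close>] x by auto
    moreover obtain z where "z \<in> C" "x < z" using less_cSupD[OF \<open>C \<noteq> {}\<close>] x by auto
    moreover have "is_interval C" using \<open>connected C\<close> is_interval_connected_1 by blast
    ultimately show "x \<in> C" unfolding is_interval_1 by (meson less_imp_le)
  qed
qed

lemma disjoint_Ioo_ordered:
  fixes l r l' r' :: real
  assumes "{l<..<r} \<inter> {l'<..<r'} = {}" and "l < r" and "l' < r'"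
  shows "r \<le> l' \<or> r' \<le> l"
proof (rule ccontr)
  assume "\<not> ?thesis"
  then have "(max l l' + min r r') / 2 \<in> {l<..<r} \<inter> {l'<..<r'}"
    using assms(2,3) by (auto simp: max_def min_def)
  then show False using assms(1) by blast
qed

lemma measure_continuous_image_Icc:
  fixes \<phi> :: "real \<Rightarrow> real"
  assumes "l \<le> r" and "continuous_on {l..r} \<phi>"
  obtains x y where "l \<le> x" "x \<le> y" "y \<le> r" "measure lebesgue (\<phi> ` {l..r}) = \<bar>\<phi> y - \<phi> x\<bar>"
proof -
  obtain c d where img: "\<phi> ` {l..r} = {c..d}" and "c \<le> d"
    using continuous_image_closed_interval[OF assms] by blast
  then obtain s t where s: "s \<in> {l..r}" "\<phi> s = c" and t: "t \<in> {l..r}" "\<phi> t = d"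
    by (metis atLeastAtMost_iff imageE order_refl)
  have "measure lebesgue (\<phi> ` {l..r}) = \<bar>\<phi> (max s t) - \<phi> (min s t)\<bar>"
    using img \<open>c \<le> d\<close> s t by (auto simp: max_def min_def)
  then show thesis
    using s(1) t(1) by (intro that[of "min s t" "max s t"]) auto
qed

lemma abs_continuous_on_image_measure_sum:
  fixes \<phi> :: "real \<Rightarrow> real"
  assumes "abs_continuous_on S \<phi>" and "is_interval S" and "e > 0"
  obtains d where "d > 0"
    and "\<And>(F :: 'c set) l r. finite F \<Longrightarrow> \<forall>C\<in>F. l C \<le> r C \<and> {l C..r C} \<subseteq> S \<Longrightarrow>
           \<forall>C\<in>F. \<forall>C'\<in>F. C \<noteq> C' \<longrightarrow> r C \<le> l C' \<or> r C' \<le> l C \<Longrightarrow>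
           (\<Sum>C\<in>F. r C - l C) < d \<Longrightarrow> (\<Sum>C\<in>F. measure lebesgue (\<phi> ` {l C..r C})) < e"
proof -
  obtain d where "d > 0" and d: "\<And>(F :: 'c set) l r. finite F \<Longrightarrow> \<forall>C\<in>F. l C \<le> r C \<and> {l C..r C} \<subseteq> S \<Longrightarrow>
           \<forall>C\<in>F. \<forall>C'\<in>F. C \<noteq> C' \<longrightarrow> r C \<le> l C' \<or> r C' \<le> l C \<Longrightarrow>
           (\<Sum>C\<in>F. r C - l C) < d \<Longrightarrow> (\<Sum>C\<in>F. norm (\<phi> (r C) - \<phi> (l C))) < e"
    by (rule abs_continuous_on_finite_family[OF assms(1,3)]) iprover
  have cont: "continuous_on S \<phi>"
    by (rule abs_continuous_on_imp_continuous_on[OF assms(1,2)])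
  show thesis
  proof (rule that[OF \<open>d > 0\<close>])
    fix F :: "'c set" and l r
    assume F: "finite F" and lr: "\<forall>C\<in>F. l C \<le> r C \<and> {l C..r C} \<subseteq> S"
      and ord: "\<forall>C\<in>F. \<forall>C'\<in>F. C \<noteq> C' \<longrightarrow> r C \<le> l C' \<or> r C' \<le> l C"
      and len: "(\<Sum>C\<in>F. r C - l C) < d"
    have "\<exists>x y. l C \<le> x \<and> x \<le> y \<and> y \<le> r C \<and> measure lebesgue (\<phi> ` {l C..r C}) = \<bar>\<phi> y - \<phi> x\<bar>"
      if "C \<in> F" for C
      using lr that continuous_on_subset[OF cont]
      by (metis measure_continuous_image_Icc)
    then obtain x y where xy: "\<And>C. C \<in> F \<Longrightarrow> l C \<le> x C \<and> x C \<le> y C \<and> y C \<le> r C \<and>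
        measure lebesgue (\<phi> ` {l C..r C}) = \<bar>\<phi> (y C) - \<phi> (x C)\<bar>"
      by metis
    have "(\<Sum>C\<in>F. y C - x C) \<le> (\<Sum>C\<in>F. r C - l C)"
      using xy by (intro sum_mono) fastforce
    then have "(\<Sum>C\<in>F. norm (\<phi> (y C) - \<phi> (x C))) < e"
    proof (intro d[OF F] ballI conjI impI)
      show "C \<in> F \<Longrightarrow> {x C..y C} \<subseteq> S" for C using xy[of C] lr by fastforce
      show "C \<in> F \<Longrightarrow> C' \<in> F \<Longrightarrow> C \<noteq> C' \<Longrightarrow> y C \<le> x C' \<or> y C' \<le> x C" for C C'
        using xy[of C] xy[of C'] ord by fastforce
    qed (use xy len in auto)
    moreover have "(\<Sum>C\<in>F. measure lebesgue (\<phi> ` {l C..r C})) = (\<Sum>C\<in>F. norm (\<phi> (y C) - \<phi> (x C)))"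
      using xy by (intro sum.cong) auto
    ultimately show "(\<Sum>C\<in>F. measure lebesgue (\<phi> ` {l C..r C})) < e" by simp
  qed
qed

lemma components_subset_Ioo:
  fixes V :: "real set"
  assumes V: "open V" "V \<subseteq> {b<..<c}" and C: "C \<in> components V"
  shows "C = {Inf C<..<Sup C}" and "Inf C < Sup C" and "b \<le> Inf C" and "Sup C \<le> c"
proof -
  have sub: "C \<subseteq> {b<..<c}" using in_components_subset V(2) C by blast
  have ne: "C \<noteq> {}" using in_components_nonempty C by blast
  show eq: "C = {Inf C<..<Sup C}"
    using open_components[OF V(1) C] in_components_connected[OF C] ne
      bounded_subset[OF bounded_Ioo sub]
    by (rule open_connected_real_eq_Ioo)
  show "Inf C < Sup C" using ne by (subst (asm) eq) simp
  show "b \<le> Inf C" "Sup C \<le> c"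
    using sub ne by (auto intro!: cInf_greatest cSup_least)
qed

lemma components_subset_Ioo_ordered:
  fixes V :: "real set"
  assumes V: "open V" "V \<subseteq> {b<..<c}"
    and C: "C \<in> components V" "C' \<in> components V" "C \<noteq> C'"
  shows "Sup C \<le> Inf C' \<or> Sup C' \<le> Inf C"
proof (rule disjoint_Ioo_ordered)
  have "C \<inter> C' = {}" using pairwise_disjoint_components C unfolding pairwise_def by blast
  then show "{Inf C<..<Sup C} \<inter> {Inf C'<..<Sup C'} = {}"
    by (simp only: components_subset_Ioo(1)[OF V C(1), symmetric]
        components_subset_Ioo(1)[OF V C(2), symmetric])
  show "Inf C < Sup C" "Inf C' < Sup C'"
    using components_subset_Ioo(2)[OF V] C(1,2) by blast+
qed

lemma sum_length_components_le_measure: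
  fixes V :: "real set"
  assumes V: "open V" "V \<subseteq> {b<..<c}" and F: "finite F" "F \<subseteq> components V"
  shows "(\<Sum>C\<in>F. Sup C - Inf C) \<le> measure lebesgue V"
proof -
  have Vm: "V \<in> lmeasurable" by (rule lmeasurable_open[OF bounded_subset[OF bounded_Ioo V(2)] V(1)])
  have Fm: "C \<in> lmeasurable" if "C \<in> F" for C
    using F(2) that V(2) by (intro lmeasurable_open open_components[OF V(1)]
        bounded_subset[OF bounded_Ioo]) (auto dest: in_components_subset)
  have mC: "measure lebesgue C = Sup C - Inf C" if "C \<in> F" for C
  proof -
    have C: "C \<in> components V" using F(2) that by blast
    have "measure lebesgue C = measure lebesgue {Inf C<..<Sup C}"
      by (rule arg_cong[OF components_subset_Ioo(1)[OF V C]])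
    also have "\<dots> = Sup C - Inf C" using components_subset_Ioo(2)[OF V C] by simp
    finally show ?thesis .
  qed
  have "pairwise disjnt (components V)"
    using pairwise_disjoint_components by (simp add: pairwise_def disjnt_def)
  then have "pairwise disjnt F" using pairwise_subset F(2) by blast
  then have "(\<Sum>C\<in>F. Sup C - Inf C) = measure lebesgue (\<Union>F)"
    using F(1) Fm mC by (simp add: measure_Union')
  also have "\<dots> \<le> measure lebesgue V"
    using F Fm by (intro measure_mono_fmeasurable[OF _ _ Vm]) (auto dest: in_components_subset)
  finally show ?thesis .
qed

text \<open>The components of \<open>V\<close> are disjoint open intervals of total length \<open>< d\<close>; on the closure of
  each, \<open>\<phi>\<close> sweeps out an interval whose length is one of its increments, so absolute continuity
  bounds the total length of these image intervals.\<close>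

lemma abs_continuous_on_small_open_image:
  fixes \<phi> :: "real \<Rightarrow> real"
  assumes ac: "abs_continuous_on {b..c} \<phi>" and "e > 0"
  obtains d where "d > 0"
    and "\<And>V. open V \<Longrightarrow> V \<subseteq> {b<..<c} \<Longrightarrow> measure lebesgue V < d \<Longrightarrow>
           \<exists>T. \<phi> ` V \<subseteq> T \<and> T \<in> lmeasurable \<and> measure lebesgue T \<le> e"
proof -
  obtain d where "d > 0" and d: "\<And>(F :: real set set) l r. finite F \<Longrightarrow>
           \<forall>C\<in>F. l C \<le> r C \<and> {l C..r C} \<subseteq> {b..c} \<Longrightarrow>
           \<forall>C\<in>F. \<forall>C'\<in>F. C \<noteq> C' \<longrightarrow> r C \<le> l C' \<or> r C' \<le> l C \<Longrightarrow>
           (\<Sum>C\<in>F. r C - l C) < d \<Longrightarrow> (\<Sum>C\<in>F. measure lebesgue (\<phi> ` {l C..r C})) < e"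
    by (rule abs_continuous_on_image_measure_sum[OF ac is_interval_cc \<open>e > 0\<close>]) iprover
  have cont: "continuous_on {b..c} \<phi>"
    by (rule abs_continuous_on_imp_continuous_on[OF ac is_interval_cc])
  show thesis
  proof (rule that[OF \<open>d > 0\<close>])
    fix V :: "real set"
    assume V: "open V" "V \<subseteq> {b<..<c}" "measure lebesgue V < d"
    define I where "I C = {Inf C..Sup C}" for C :: "real set"
    note C = components_subset_Ioo[OF V(1,2)]
    have Im: "\<phi> ` I C \<in> lmeasurable" if "C \<in> components V" for C
      using C(3,4)[OF that] by (auto intro!: lmeasurable_compact compact_continuous_image
          continuous_on_subset[OF cont] simp: I_def)
    let ?\<D> = "(\<lambda>C. \<phi> ` I C) ` components V"
    have cnt: "countable ?\<D>"
      using pairwise_disjoint_components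
      by (intro countable_image countable_disjoint_open_subsets)
        (auto intro: open_components V(1) simp: pairwise_def disjnt_def)
    have Dm: "D \<in> lmeasurable" if "D \<in> ?\<D>" for D using Im that by blast
    have bound: "measure lebesgue (\<Union>\<E>) \<le> e" if \<E>: "\<E> \<subseteq> ?\<D>" "finite \<E>" for \<E>
    proof -
      obtain F where F: "F \<subseteq> components V" "finite F" "\<E> = (\<lambda>C. \<phi> ` I C) ` F"
        using finite_subset_image[OF \<E>(2,1)] by blast
      have "(\<Sum>C\<in>F. Sup C - Inf C) < d"
        using sum_length_components_le_measure[OF V(1,2) F(2,1)] V(3) by linarith
      moreover have "\<forall>C\<in>F. Inf C \<le> Sup C \<and> {Inf C..Sup C} \<subseteq> {b..c}"
      proof
        fix C assume "C \<in> F"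
        then have "C \<in> components V" using F(1) by blast
        then show "Inf C \<le> Sup C \<and> {Inf C..Sup C} \<subseteq> {b..c}" using C(2-4) by fastforce
      qed
      moreover have "\<forall>C\<in>F. \<forall>C'\<in>F. C \<noteq> C' \<longrightarrow> Sup C \<le> Inf C' \<or> Sup C' \<le> Inf C"
        using components_subset_Ioo_ordered[OF V(1,2)] F(1) by blast
      ultimately have "(\<Sum>C\<in>F. measure lebesgue (\<phi> ` I C)) < e"
        using d[OF F(2), of Inf Sup] unfolding I_def by simp
      moreover have "measure lebesgue (\<Union>\<E>) \<le> (\<Sum>C\<in>F. measure lebesgue (\<phi> ` I C))"
        unfolding F(3) using F(1,2) Im by (auto intro!: measure_UNION_le)
      ultimately show ?thesis by linarith
    qed
    have "\<phi> ` V \<subseteq> \<Union>?\<D>"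
    proof
      fix y assume "y \<in> \<phi> ` V"
      then obtain x C where "y = \<phi> x" "x \<in> C" "C \<in> components V"
        using Union_components[of V] by blast
      moreover have "C \<subseteq> I C"
        using equalityD1[OF C(1)[OF \<open>C \<in> components V\<close>]] by (auto simp: I_def)
      ultimately show "y \<in> \<Union>?\<D>" by blast
    qed
    then show "\<exists>T. \<phi> ` V \<subseteq> T \<and> T \<in> lmeasurable \<and> measure lebesgue T \<le> e"
      using fmeasurable_Union_bound[OF cnt Dm bound] measure_Union_bound[OF cnt Dm bound] by blast
  qed
qed

lemma abs_continuous_on_negligible_image:
  fixes \<phi> :: "real \<Rightarrow> real"
  assumes ac: "abs_continuous_on {b..c} \<phi>" and N: "negligible N" "N \<subseteq> {b<..<c}"
  shows "negligible (\<phi> ` N)"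
  unfolding negligible_outer_le
proof (intro allI impI)
  fix e :: real assume "e > 0"
  obtain d where "d > 0" and d: "\<And>V. open V \<Longrightarrow> V \<subseteq> {b<..<c} \<Longrightarrow> measure lebesgue V < d \<Longrightarrow>
           \<exists>T. \<phi> ` V \<subseteq> T \<and> T \<in> lmeasurable \<and> measure lebesgue T \<le> e"
    by (rule abs_continuous_on_small_open_image[OF ac \<open>e > 0\<close>]) iprover
  obtain U where U: "open U" "N \<subseteq> U" "U - N \<in> lmeasurable" "emeasure lebesgue (U - N) < ennreal d"
    using sets_lebesgue_outer_open[OF negligible_imp_sets[OF N(1)] \<open>d > 0\<close>] by blast
  have UNm: "(U - N) \<union> N \<in> lmeasurable"
    by (rule fmeasurable.Un[OF U(3) negligible_imp_measurable[OF N(1)]])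
  have Vo: "open (U \<inter> {b<..<c})" using U(1) by (simp add: open_Int)
  then have Vm: "U \<inter> {b<..<c} \<in> lmeasurable"
    by (intro lmeasurable_open bounded_subset[OF bounded_Ioo[of b c]]) auto
  have "measure lebesgue (U \<inter> {b<..<c}) \<le> measure lebesgue ((U - N) \<union> N)"
    by (rule measure_mono_fmeasurable[OF _ fmeasurableD[OF Vm] UNm]) blast
  also have "\<dots> \<le> measure lebesgue (U - N) + measure lebesgue N"
    by (rule measure_Un_le[OF fmeasurableD[OF U(3)] negligible_imp_sets[OF N(1)]])
  also have "\<dots> < d"
    using U(3,4) negligible_imp_measure0[OF N(1)] by (simp add: emeasure_eq_measure2 ennreal_less_iff)
  finally obtain T where "\<phi> ` (U \<inter> {b<..<c}) \<subseteq> T" "T \<in> lmeasurable" "measure lebesgue T \<le> e"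
    using d[OF Vo Int_lower2] by blast
  then show "\<exists>T. \<phi> ` N \<subseteq> T \<and> T \<in> lmeasurable \<and> measure lebesgue T \<le> e"
    using U(2) N(2) by blast
qed

section \<open>The fundamental theorem of calculus as an estimate\<close>

lemma lmeasurable_measure_iff_has_integral_one:
  fixes S :: "'a::euclidean_space set"
  shows "S \<in> lmeasurable \<and> m = measure lebesgue S \<longleftrightarrow> ((\<lambda>x. 1::real) has_integral m) S"
proof -
  have "indicat_real S = (\<lambda>x. if x \<in> S then 1 else 0)" by (auto simp: indicator_def)
  then show ?thesis
    using lmeasurable_iff_indicator_has_integral[of S m] has_integral_restrict_UNIV[of S "\<lambda>x. 1::real" m]
    by simp
qed

text \<open>The area formula of the library is stated for maps of \<open>real^'n\<close>; transport through \<open>real^1\<close>.\<close>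

lemma measure_image_le_integral_abs_deriv:
  fixes f f' :: "real \<Rightarrow> real"
  assumes S: "S \<in> sets lebesgue"
    and deriv: "\<And>x. x \<in> S \<Longrightarrow> (f has_real_derivative f' x) (at x within S)"
    and int: "(\<lambda>x. \<bar>f' x\<bar>) integrable_on S"
  shows "f ` S \<in> lmeasurable \<and> measure lebesgue (f ` S) \<le> integral S (\<lambda>x. \<bar>f' x\<bar>)"
proof -
  let ?lift = "vec :: real \<Rightarrow> real^1"
  define F where "F = (\<lambda>v::real^1. ?lift (f (v $ 1)))"
  define F' where "F' = (\<lambda>v::real^1. (\<lambda>h::real^1. f' (v $ 1) *\<^sub>R h))"
  have S': "?lift ` S \<in> sets lebesgue"
    by (auto intro: differentiable_image_in_sets_lebesgue[OF S] differentiable_vec)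
  have "((\<lambda>x. vec (f (x $ 1))) has_derivative (*\<^sub>R) (f' z)) (at (vec z) within ?lift ` S)"
    if "z \<in> S" for z
    using deriv[OF that] unfolding has_real_derivative_iff_has_vector_derivative
    by (simp add: has_vector_derivative_def has_derivative_vector_1)
  then have der': "\<And>x. x \<in> ?lift ` S \<Longrightarrow> (F has_derivative F' x) (at x within ?lift ` S)"
    by (auto simp: F_def F'_def)
  have det: "\<bar>det (matrix (F' x))\<bar> = \<bar>f' (x $ 1)\<bar>" for x
    by (simp add: F'_def det_1 matrix_def axis_def)
  have dS: "(\<lambda>x. x $ 1) ` ?lift ` S = S" by (force simp: image_image)
  have "((\<lambda>v::real^1. \<bar>f' (v $ 1)\<bar>) has_integral integral S (\<lambda>x. \<bar>f' x\<bar>)) (?lift ` S)"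
    using integrable_integral[OF int] by (intro has_integral_vec1_D) (simp add: dS o_def)
  then have int': "(\<lambda>x. \<bar>det (matrix (F' x))\<bar>) integrable_on ?lift ` S"
    and intEq: "integral (?lift ` S) (\<lambda>x. \<bar>det (matrix (F' x))\<bar>) = integral S (\<lambda>x. \<bar>f' x\<bar>)"
    unfolding det by blast+
  have T: "F ` ?lift ` S \<in> lmeasurable"
    and mT: "measure lebesgue (F ` ?lift ` S) \<le> integral S (\<lambda>x. \<bar>f' x\<bar>)"
    using measurable_differentiable_image[OF S' der' int'] measure_differentiable_image[OF S' der' int'] intEq
    by auto
  have "((\<lambda>x. 1::real) has_integral measure lebesgue (F ` ?lift ` S)) (F ` ?lift ` S)"
    using T lmeasurable_measure_iff_has_integral_one by blast
  then have "(((\<lambda>x::real^1. 1::real) \<circ> vec) has_integral measure lebesgue (F ` ?lift ` S))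
      ((\<lambda>x. x $ 1) ` F ` ?lift ` S)"
    by (rule has_integral_vec1_I)
  moreover have "(\<lambda>x. x $ 1) ` F ` ?lift ` S = f ` S" by (force simp: F_def image_image)
  ultimately have "((\<lambda>x. 1::real) has_integral measure lebesgue (F ` ?lift ` S)) (f ` S)"
    by (simp add: o_def)
  then have "f ` S \<in> lmeasurable \<and> measure lebesgue (F ` ?lift ` S) = measure lebesgue (f ` S)"
    using lmeasurable_measure_iff_has_integral_one by blast
  then show ?thesis using mT by simp
qed

lemma integral_abs_subset_le_lebesgue_on:
  fixes \<psi> :: "real \<Rightarrow> real"
  assumes int: "integrable (lebesgue_on T) \<psi>" and T: "T \<in> sets lebesgue"
    and S: "S \<in> sets lebesgue" "S \<subseteq> T"
  shows "(\<lambda>t. \<bar>\<psi> t\<bar>) integrable_on S"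
    and "integral S (\<lambda>t. \<bar>\<psi> t\<bar>) \<le> integral\<^sup>L (lebesgue_on T) (\<lambda>t. \<bar>\<psi> t\<bar>)"
proof -
  have absint: "integrable (lebesgue_on T) (\<lambda>t. \<bar>\<psi> t\<bar>)" using int by (rule integrable_abs)
  then have "set_integrable lebesgue T (\<lambda>t. \<bar>\<psi> t\<bar>)"
    unfolding set_integrable_def using T by (simp add: integrable_restrict_space)
  then show intS: "(\<lambda>t. \<bar>\<psi> t\<bar>) integrable_on S"
    using set_integrable_subset[OF _ S] by (blast intro: set_lebesgue_integral_eq_integral)
  have intT: "(\<lambda>t. \<bar>\<psi> t\<bar>) integrable_on T"
    using absint T by (rule integrable_on_lebesgue_on)
  have "integral S (\<lambda>t. \<bar>\<psi> t\<bar>) \<le> integral T (\<lambda>t. \<bar>\<psi> t\<bar>)"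
    using integral_subset_le[OF S(2) intS intT] by simp
  also have "\<dots> = integral\<^sup>L (lebesgue_on T) (\<lambda>t. \<bar>\<psi> t\<bar>)"
    using has_integral_integral_lebesgue_on[OF absint T] by (simp add: integral_unique)
  finally show "integral S (\<lambda>t. \<bar>\<psi> t\<bar>) \<le> integral\<^sup>L (lebesgue_on T) (\<lambda>t. \<bar>\<psi> t\<bar>)" .
qed

text \<open>The image \<open>\<phi> ` {0..a}\<close> contains the segment between \<open>\<phi> 0\<close> and \<open>\<phi> x\<close>, and up to a null set
  (Lusin's N-property) it is the image of the set where \<open>\<phi>\<close> is differentiable.\<close>

lemma abs_continuous_on_diff_le_integral:
  fixes \<phi> \<psi> :: "real \<Rightarrow> real"
  assumes ac: "abs_continuous_on {0..a} \<phi>"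
    and ae: "AE t in lebesgue_on {0..a}. (\<phi> has_real_derivative \<psi> t) (at t within {0..a})"
    and int: "integrable (lebesgue_on {0..a}) \<psi>"
    and x: "x \<in> {0..a}"
  shows "\<bar>\<phi> x - \<phi> 0\<bar> \<le> integral\<^sup>L (lebesgue_on {0..a}) (\<lambda>t. \<bar>\<psi> t\<bar>)"
proof -
  obtain N where Nder: "\<And>t. t \<in> {0..a} - N \<Longrightarrow> (\<phi> has_real_derivative \<psi> t) (at t within {0..a})"
    and N: "N \<in> null_sets (lebesgue_on {0..a})"
    using AE_E3[OF ae] by auto
  have Nn: "N \<in> null_sets lebesgue"
    using N null_sets_restrict_space[of "{0..a}" lebesgue N] by auto
  define S where "S = {0<..<a} - N"
  have Ssets: "S \<in> sets lebesgue" and Ssub: "S \<subseteq> {0..a}" using Nn by (auto simp: S_def)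
  have der: "(\<phi> has_real_derivative \<psi> t) (at t within S)" if "t \<in> S" for t
    using Nder[of t] that Ssub by (auto simp: S_def intro: has_field_derivative_subset)
  have intS: "(\<lambda>t. \<bar>\<psi> t\<bar>) integrable_on S"
    and intS_le: "integral S (\<lambda>t. \<bar>\<psi> t\<bar>) \<le> integral\<^sup>L (lebesgue_on {0..a}) (\<lambda>t. \<bar>\<psi> t\<bar>)"
    using integral_abs_subset_le_lebesgue_on[OF int _ Ssets Ssub] by auto
  have img: "\<phi> ` S \<in> lmeasurable" "measure lebesgue (\<phi> ` S) \<le> integral S (\<lambda>t. \<bar>\<psi> t\<bar>)"
    using measure_image_le_integral_abs_deriv[OF Ssets der intS] by auto
  define Z where "Z = \<phi> ` ({0<..<a} \<inter> N) \<union> {\<phi> 0, \<phi> a}"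
  have "negligible N" using Nn by (simp add: negligible_iff_null_sets)
  then have "negligible ({0<..<a} \<inter> N)" by (rule negligible_subset) blast
  then have "negligible Z"
    unfolding Z_def using abs_continuous_on_negligible_image[OF ac _ Int_lower1] by simp
  then have Z: "Z \<in> null_sets lebesgue" "Z \<in> lmeasurable"
    by (auto simp: negligible_iff_null_sets negligible_imp_measurable)
  have "{0..a} \<subseteq> S \<union> ({0<..<a} \<inter> N) \<union> {0, a}" by (auto simp: S_def)
  then have cover: "\<phi> ` {0..a} \<subseteq> \<phi> ` S \<union> Z" unfolding Z_def by blast
  have "is_interval (\<phi> ` {0..a})"
    using connected_continuous_image[OF abs_continuous_on_imp_continuous_on[OF ac is_interval_cc]]
    by (simp add: is_interval_connected_1)
  then have seg: "closed_segment (\<phi> 0) (\<phi> x) \<subseteq> \<phi> ` {0..a}"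
    using x by (intro closed_segment_subset) (auto simp: is_interval_convex_1)
  have "\<bar>\<phi> x - \<phi> 0\<bar> = measure lebesgue (closed_segment (\<phi> 0) (\<phi> x))"
    by (simp add: closed_segment_eq_real_ivl)
  also have "\<dots> \<le> measure lebesgue (\<phi> ` S \<union> Z)"
    using seg cover img(1) Z(2) by (intro measure_mono_fmeasurable) (auto intro: fmeasurable.Un)
  also have "\<dots> = measure lebesgue (\<phi> ` S)"
    using img(1) Z(1) by (intro measure_Un_null_set) auto
  also have "\<dots> \<le> integral\<^sup>L (lebesgue_on {0..a}) (\<lambda>t. \<bar>\<psi> t\<bar>)"
    using img(2) intS_le by linarith
  finally show ?thesis .
qed

lemma L2_on_imp_integrable:
  assumes "L2_on S g" and "S \<in> lmeasurable"
  shows "integrable (lebesgue_on S) g"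
proof -
  interpret finite_measure "lebesgue_on S" by (rule finite_measure_lebesgue_on[OF assms(2)])
  have sq: "integrable (lebesgue_on S) (\<lambda>x. (cmod (g x))\<^sup>2)" and meas: "g \<in> borel_measurable (lebesgue_on S)"
    using assms(1) unfolding L2_on_def by auto
  have bound: "cmod (g t) \<le> 1 + (cmod (g t))\<^sup>2" for t
  proof -
    have "0 \<le> (cmod (g t) - 1)\<^sup>2" by simp
    then have "2 * cmod (g t) \<le> (cmod (g t))\<^sup>2 + 1" by (simp add: power2_diff)
    then show ?thesis using norm_ge_zero[of "g t"] by linarith
  qed
  show ?thesis
  proof (rule Bochner_Integration.integrable_bound[OF _ meas])
    show "integrable (lebesgue_on S) (\<lambda>t. 1 + (cmod (g t))\<^sup>2)"
      by (rule Bochner_Integration.integrable_add[OF integrable_const sq])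
  qed (simp add: bound)
qed

text \<open>Cauchy--Schwarz, from \<open>0 \<le> \<integral>(|g| - c)\<^sup>2\<close> with \<open>c\<close> the mean value of \<open>|g|\<close>.\<close>

lemma integral_norm_squared_le:
  fixes g :: "real \<Rightarrow> complex"
  assumes "a > 0" and gi: "integrable (lebesgue_on {0..a}) g"
    and sqi: "integrable (lebesgue_on {0..a}) (\<lambda>t. (cmod (g t))\<^sup>2)"
  shows "(integral\<^sup>L (lebesgue_on {0..a}) (\<lambda>t. cmod (g t)))\<^sup>2
           \<le> a * integral\<^sup>L (lebesgue_on {0..a}) (\<lambda>t. (cmod (g t))\<^sup>2)"
proof -
  interpret finite_measure "lebesgue_on {0..a}" by (rule finite_measure_lebesgue_on) simp
  define m where "m = integral\<^sup>L (lebesgue_on {0..a}) (\<lambda>t. cmod (g t))"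
  define Q where "Q = integral\<^sup>L (lebesgue_on {0..a}) (\<lambda>t. (cmod (g t))\<^sup>2)"
  define c where "c = m / a"
  have ni: "integrable (lebesgue_on {0..a}) (\<lambda>t. cmod (g t))" using gi by (rule integrable_norm)
  have "0 \<le> integral\<^sup>L (lebesgue_on {0..a}) (\<lambda>t. (cmod (g t) - c)\<^sup>2)"
    by (rule integral_nonneg_AE) simp
  also have "\<dots> = integral\<^sup>L (lebesgue_on {0..a}) (\<lambda>t. (cmod (g t))\<^sup>2 - 2 * c * cmod (g t) + c\<^sup>2)"
    by (simp add: power2_diff algebra_simps)
  also have "\<dots> = Q - 2 * c * m + c\<^sup>2 * a"
    using sqi ni \<open>a > 0\<close> by (simp add: Q_def m_def measure_restrict_space)
  also have "\<dots> = Q - m\<^sup>2 / a"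
    using \<open>a > 0\<close> by (simp add: c_def power2_eq_square field_simps)
  finally show ?thesis
    using \<open>a > 0\<close> by (simp add: m_def Q_def field_simps)
qed

lemma abs_continuous_on_norm_diff_le_integral:
  fixes u g :: "real \<Rightarrow> complex"
  assumes ac: "abs_continuous_on {0..a} u"
    and ae: "AE t in lebesgue_on {0..a}. (u has_vector_derivative g t) (at t within {0..a})"
    and gi: "integrable (lebesgue_on {0..a}) g" and x: "x \<in> {0..a}"
  shows "cmod (u x - u 0) \<le> integral\<^sup>L (lebesgue_on {0..a}) (\<lambda>t. cmod (g t))"
proof (cases "u x = u 0")
  case True
  have "0 \<le> integral\<^sup>L (lebesgue_on {0..a}) (\<lambda>t. cmod (g t))"
    by (rule integral_nonneg_AE) simp
  then show ?thesis using True by simp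
next
  case False
  \<comment> \<open>Multiplying by \<open>c\<close> makes the increment real, which reduces to the real-valued case.\<close>
  define z where "z = u x - u 0"
  have "z \<noteq> 0" using False by (simp add: z_def)
  define c where "c = cnj z / cmod z"
  have "cmod c = 1" using \<open>z \<noteq> 0\<close> by (simp add: c_def norm_divide)
  have "c * z = of_real ((cmod z)\<^sup>2) / of_real (cmod z)"
    unfolding c_def complex_norm_square by (simp add: field_simps)
  then have cz: "Re (c * (u x - u 0)) = cmod (u x - u 0)"
    using \<open>z \<noteq> 0\<close> by (simp add: z_def power2_eq_square)
  have lin: "bounded_linear (\<lambda>w. Re (c * w))"
    by (rule bounded_linear_compose[OF bounded_linear_Re bounded_linear_mult_right])
  have ae': "AE t in lebesgue_on {0..a}.
      ((\<lambda>t. Re (c * u t)) has_real_derivative Re (c * g t)) (at t within {0..a})"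
    using ae
  proof eventually_elim
    case (elim t)
    show ?case
      using bounded_linear.has_vector_derivative[OF lin elim]
      unfolding has_real_derivative_iff_has_vector_derivative .
  qed
  have ci: "integrable (lebesgue_on {0..a}) (\<lambda>t. Re (c * g t))"
    using gi by (intro integrable_Re integrable_mult_right)
  have "cmod (u x - u 0) = Re (c * u x) - Re (c * u 0)"
    using cz by (simp add: right_diff_distrib)
  also have "\<dots> \<le> \<bar>Re (c * u x) - Re (c * u 0)\<bar>" by (rule abs_ge_self)
  also have "\<dots> \<le> integral\<^sup>L (lebesgue_on {0..a}) (\<lambda>t. \<bar>Re (c * g t)\<bar>)"
    by (rule abs_continuous_on_diff_le_integral[OF abs_continuous_on_compose_bounded_linear[OF ac lin]
        ae' ci x])
  also have "\<dots> \<le> integral\<^sup>L (lebesgue_on {0..a}) (\<lambda>t. cmod (g t))"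
  proof (rule integral_mono)
    show "integrable (lebesgue_on {0..a}) (\<lambda>t. \<bar>Re (c * g t)\<bar>)"
      using ci by (rule integrable_abs)
    show "integrable (lebesgue_on {0..a}) (\<lambda>t. cmod (g t))" using gi by (rule integrable_norm)
    show "\<bar>Re (c * g t)\<bar> \<le> cmod (g t)" for t
      using abs_Re_le_cmod[of "c * g t"] \<open>cmod c = 1\<close> by (simp add: norm_mult)
  qed
  finally show ?thesis .
qed

lemma edge_W_norm_diff_le:
  assumes "edge_W a u g" and "x \<in> {0..a}"
  shows "cmod (u x - u 0) \<le> integral\<^sup>L (lebesgue_on {0..a}) (\<lambda>t. cmod (g t))"
  using assms L2_on_imp_integrable[of "{0..a}" g]
  by (intro abs_continuous_on_norm_diff_le_integral) (auto simp: edge_W_def)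

section \<open>The boundary condition\<close>

lemma sum_UNIV_Plus:
  "sum f (UNIV :: ('a::finite + 'b::finite) set) = (\<Sum>i\<in>UNIV. f (Inl i)) + (\<Sum>i\<in>UNIV. f (Inr i))"
  using sum.Plus[of "UNIV :: 'a set" "UNIV :: 'b set" f] by (simp add: o_def)

lemma M0_mult_edgewise_constant_eq_0:
  fixes a :: "'i::finite \<Rightarrow> real"
  shows "M0 a *v (\<chi> k. case k of Inl i \<Rightarrow> x i | Inr i \<Rightarrow> x i) = 0"
proof -
  have "(M0 a *v (\<chi> k. case k of Inl i \<Rightarrow> x i | Inr i \<Rightarrow> x i)) $ k = 0" for k
    by (cases k) (simp_all add: matrix_vector_mult_def M0_def sum_UNIV_Plus
        if_distrib[of "\<lambda>z. z * _"] cong: if_cong)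
  then show ?thesis by (simp add: vec_eq_iff)
qed

lemma compression_mult_eq:
  fixes M P :: "'a::comm_ring_1^'n^'n"
  assumes "P *v (v + d) = 0" and "M *v v = 0"
  shows "((mat 1 - P) ** M ** (mat 1 - P) + P) *v v = ((mat 1 - P) ** M ** P - P) *v d"
proof -
  have Pv: "P *v v = - (P *v d)"
    using assms(1) by (simp add: matrix_vector_right_distrib eq_neg_iff_add_eq_0)
  then have Qv: "(mat 1 - P) *v v = v + P *v d" by (simp add: matrix_vector_mult_diff_rdistrib)
  have "((mat 1 - P) ** M ** (mat 1 - P) + P) *v v = (mat 1 - P) *v (M *v ((mat 1 - P) *v v)) + P *v v"
    by (simp add: matrix_vector_mult_add_rdistrib matrix_vector_mul_assoc matrix_mul_assoc)
  also have "\<dots> = (mat 1 - P) *v (M *v (P *v d)) - P *v d"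
    using Qv Pv assms(2) by (simp add: matrix_vector_right_distrib)
  also have "\<dots> = ((mat 1 - P) ** M ** P - P) *v d"
    by (simp add: matrix_vector_mult_diff_rdistrib matrix_vector_mul_assoc matrix_mul_assoc)
  finally show ?thesis .
qed

lemma boundary_values_bound:
  fixes a :: "'i::finite \<Rightarrow> real" and P :: "complex^('i+'i)^('i+'i)"
  assumes ker: "\<And>v. ((mat 1 - P) ** M0 a ** (mat 1 - P) + P) *v v = 0 \<Longrightarrow> v = 0"
  obtains K where "K > 0"
    and "\<And>u i. P *v bdry a u = 0 \<Longrightarrow> cmod (u i 0) \<le> K * (\<Sum>j\<in>UNIV. cmod (u j (a j) - u j 0))"
proof -
  define A where "A = (mat 1 - P) ** M0 a ** (mat 1 - P) + P"
  define B where "B = (mat 1 - P) ** M0 a ** P - P"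
  have "inj ((*v) A)"
  proof (rule injI)
    fix x y assume "A *v x = A *v y"
    then have "A *v (x - y) = 0" by (simp add: matrix_vector_mult_diff_distrib)
    then show "x = y" using ker unfolding A_def by fastforce
  qed
  then obtain \<beta> where "\<beta> > 0" and \<beta>: "\<And>x. \<beta> * norm x \<le> norm (A *v x)"
    using linear_inj_bounded_below_pos[of "(*v) A"] by auto
  obtain L where "L > 0" and L: "\<And>x. norm (B *v x) \<le> norm x * L"
    using bounded_linear.pos_bounded[OF matrix_vector_mul_bounded_linear[of B]] by blast
  show thesis
  proof (rule that[of "L / \<beta>"])
    show "L / \<beta> > 0" using \<open>L > 0\<close> \<open>\<beta> > 0\<close> by simp
    fix u :: "'i \<Rightarrow> real \<Rightarrow> complex" and i
    assume Pb: "P *v bdry a u = 0"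
    define v :: "complex^('i+'i)" where "v = (\<chi> k. case k of Inl i \<Rightarrow> u i 0 | Inr i \<Rightarrow> u i 0)"
    define d :: "complex^('i+'i)" where "d = (\<chi> k. case k of Inl i \<Rightarrow> 0 | Inr i \<Rightarrow> u i (a i) - u i 0)"
    have "bdry a u = v + d"
      by (simp add: vec_eq_iff bdry_def v_def d_def split: sum.splits)
    then have Av: "A *v v = B *v d"
      unfolding A_def B_def using Pb M0_mult_edgewise_constant_eq_0
      by (intro compression_mult_eq) (simp_all add: v_def)
    have nd: "norm d \<le> (\<Sum>j\<in>UNIV. cmod (u j (a j) - u j 0))"
    proof -
      have "norm d \<le> (\<Sum>k\<in>UNIV. norm (d $ k))"
        unfolding norm_vec_def by (rule L2_set_le_sum) simp
      also have "\<dots> = (\<Sum>j\<in>UNIV. cmod (u j (a j) - u j 0))"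
        by (simp add: sum_UNIV_Plus d_def)
      finally show ?thesis .
    qed
    have "norm (v $ Inl i) \<le> norm v" by (rule Finite_Cartesian_Product.norm_nth_le)
    then have "cmod (u i 0) \<le> norm v" by (simp add: v_def)
    also have "\<dots> \<le> norm (B *v d) / \<beta>"
      using \<beta>[of v] \<open>\<beta> > 0\<close> Av by (simp add: field_simps)
    also have "\<dots> \<le> (\<Sum>j\<in>UNIV. cmod (u j (a j) - u j 0)) * L / \<beta>"
      using L[of d] nd \<open>L > 0\<close> \<open>\<beta> > 0\<close>
      by (intro divide_right_mono order_trans[OF L[of d]] mult_right_mono) auto
    finally show "cmod (u i 0) \<le> L / \<beta> * (\<Sum>j\<in>UNIV. cmod (u j (a j) - u j 0))"
      by (simp add: mult.commute)
  qed
qed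

section \<open>Bounding \<open>u\<close> by \<open>u'\<close>\<close>

lemma edge_L1_le_H_norm:
  fixes a :: "'i::finite \<Rightarrow> real"
  assumes a: "\<And>j. a j > 0" and L2: "\<And>j. L2_on {0..a j} (g j)"
  shows "integral\<^sup>L (lebesgue_on {0..a i}) (\<lambda>t. cmod (g i t)) \<le> sqrt (\<Sum>j\<in>UNIV. a j) * H_norm a g"
proof -
  define Q where "Q j = integral\<^sup>L (lebesgue_on {0..a j}) (\<lambda>t. (cmod (g j t))\<^sup>2)" for j
  have Q: "Q j \<ge> 0" for j unfolding Q_def by (rule integral_nonneg_AE) simp
  have H: "(H_norm a g)\<^sup>2 = (\<Sum>j\<in>UNIV. Q j)" "H_norm a g \<ge> 0"
    using Q by (simp_all add: H_norm_def Q_def sum_nonneg)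
  have "(integral\<^sup>L (lebesgue_on {0..a i}) (\<lambda>t. cmod (g i t)))\<^sup>2 \<le> a i * Q i"
    unfolding Q_def using L2[of i] a[of i] L2_on_imp_integrable[OF L2[of i]]
    by (intro integral_norm_squared_le) (simp_all add: L2_on_def)
  also have "\<dots> \<le> (\<Sum>j\<in>UNIV. a j) * (\<Sum>j\<in>UNIV. Q j)"
    using a Q by (intro mult_mono member_le_sum sum_nonneg) (auto intro: less_imp_le)
  finally have "integral\<^sup>L (lebesgue_on {0..a i}) (\<lambda>t. cmod (g i t)) \<le> sqrt ((\<Sum>j\<in>UNIV. a j) * (H_norm a g)\<^sup>2)"
    unfolding H(1) by (rule real_le_rsqrt)
  then show ?thesis using H(2) by (simp add: real_sqrt_mult)
qed

lemma H_norm_le_of_bound: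
  fixes a :: "'i::finite \<Rightarrow> real"
  assumes a: "\<And>i. a i \<ge> 0" and B: "\<And>i x. x \<in> {0..a i} \<Longrightarrow> cmod (u i x) \<le> B"
  shows "H_norm a u \<le> sqrt (\<Sum>i\<in>UNIV. a i) * B"
proof -
  have "cmod (u undefined 0) \<le> B" by (rule B) (simp add: a)
  then have "B \<ge> 0" using norm_ge_zero[of "u undefined 0"] by linarith
  have int_le: "integral\<^sup>L (lebesgue_on {0..a i}) (\<lambda>x. (cmod (u i x))\<^sup>2) \<le> a i * B\<^sup>2" for i
  proof (cases "integrable (lebesgue_on {0..a i}) (\<lambda>x. (cmod (u i x))\<^sup>2)")
    case True
    interpret finite_measure "lebesgue_on {0..a i}" by (rule finite_measure_lebesgue_on) simp
    have "integral\<^sup>L (lebesgue_on {0..a i}) (\<lambda>x. (cmod (u i x))\<^sup>2) \<le> integral\<^sup>L (lebesgue_on {0..a i}) (\<lambda>x. B\<^sup>2)"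
    proof (rule integral_mono[OF True])
      show "(cmod (u i x))\<^sup>2 \<le> B\<^sup>2" if "x \<in> space (lebesgue_on {0..a i})" for x
        using that by (intro power_mono B) auto
    qed simp
    also have "\<dots> = a i * B\<^sup>2" using a[of i] by (simp add: measure_restrict_space)
    finally show ?thesis .
  next
    case False
    then show ?thesis using a[of i] by (simp add: not_integrable_integral_eq)
  qed
  have "H_norm a u \<le> sqrt (\<Sum>i\<in>UNIV. a i * B\<^sup>2)"
    unfolding H_norm_def using int_le by (intro real_sqrt_le_mono sum_mono)
  also have "\<dots> = sqrt ((\<Sum>i\<in>UNIV. a i) * B\<^sup>2)" by (simp add: sum_distrib_right)
  also have "\<dots> = sqrt (\<Sum>i\<in>UNIV. a i) * B" using \<open>B \<ge> 0\<close> by (simp add: real_sqrt_mult)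
  finally show ?thesis .
qed

lemma edge_W_sup_le_H_norm:
  fixes a :: "'i::finite \<Rightarrow> real"
  assumes a: "\<And>j. a j > 0" and W: "\<And>j. edge_W (a j) (u j) (u' j)" and "K \<ge> 0"
    and bdry_bound: "\<And>k. cmod (u k 0) \<le> K * (\<Sum>j\<in>UNIV. cmod (u j (a j) - u j 0))"
    and x: "x \<in> {0..a i}"
  shows "cmod (u i x) \<le> (K + 1) * (real CARD('i) * (sqrt (\<Sum>j\<in>UNIV. a j) * H_norm a u'))"
proof -
  define R where "R = sqrt (\<Sum>j\<in>UNIV. a j) * H_norm a u'"
  have L2: "L2_on {0..a j} (u' j)" for j using W[of j] by (simp add: edge_W_def)
  have incr: "cmod (u j y - u j 0) \<le> R" if "y \<in> {0..a j}" for j y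
    unfolding R_def by (rule order_trans[OF edge_W_norm_diff_le[OF W that] edge_L1_le_H_norm[of a u' j, OF a L2]])
  have "0 \<le> R" using incr[of 0 undefined] a[of undefined] by simp
  then have "R \<le> real CARD('i) * R"
    using mult_right_mono[of 1 "real CARD('i)" R] by simp
  have "(\<Sum>j\<in>UNIV. cmod (u j (a j) - u j 0)) \<le> real CARD('i) * R"
    using incr a by (intro sum_bounded_above) (simp add: less_imp_le)
  then have "cmod (u i 0) \<le> K * (real CARD('i) * R)"
    by (rule order_trans[OF bdry_bound mult_left_mono[OF _ \<open>K \<ge> 0\<close>]])
  moreover have "cmod (u i x) \<le> cmod (u i 0) + cmod (u i x - u i 0)" by (rule norm_triangle_sub)
  ultimately show ?thesis
    using incr[OF x] \<open>R \<le> real CARD('i) * R\<close> unfolding R_def by (simp add: algebra_simps)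
qed

theorem theorem4p2:
  fixes a :: "'i::finite \<Rightarrow> real"
    and P :: "complex ^ ('i + 'i) ^ ('i + 'i)"
  assumes a_pos: "\<And>i. a i > 0"
    and proj: "orth_projector P"
    and ker: "\<And>v. ((mat 1 - P) ** M0 a ** (mat 1 - P) + P) *v v = 0 \<Longrightarrow> v = 0"
  shows "\<exists>C>0. \<forall>u u'. (\<forall>i. edge_W (a i) (u i) (u' i)) \<and> P *v bdry a u = 0
            \<longrightarrow> H_norm a u' \<ge> C * H_norm a u"
proof -
  obtain K where "K > 0" and K: "\<And>u i. P *v bdry a u = 0 \<Longrightarrow>
      cmod (u i 0) \<le> K * (\<Sum>j\<in>UNIV. cmod (u j (a j) - u j 0))"
    using boundary_values_bound[OF ker] by blast
  define A where "A = (\<Sum>i\<in>UNIV. a i)"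
  have "A > 0" unfolding A_def using a_pos by (simp add: sum_pos)
  define C where "C = 1 / (A * (K + 1) * real CARD('i))"
  show ?thesis
  proof (intro exI[of _ C] conjI allI impI)
    show "C > 0" using \<open>A > 0\<close> \<open>K > 0\<close> by (simp add: C_def)
    fix u u' :: "'i \<Rightarrow> real \<Rightarrow> complex"
    assume "(\<forall>i. edge_W (a i) (u i) (u' i)) \<and> P *v bdry a u = 0"
    then have "cmod (u i x) \<le> (K + 1) * (real CARD('i) * (sqrt A * H_norm a u'))"
      if "x \<in> {0..a i}" for i x
      using edge_W_sup_le_H_norm[of a u u' K x i] a_pos K \<open>K > 0\<close> that unfolding A_def by simp
    then have "H_norm a u \<le> sqrt A * ((K + 1) * (real CARD('i) * (sqrt A * H_norm a u')))"
      unfolding A_def by (rule H_norm_le_of_bound[OF less_imp_le[OF a_pos]])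
    also have "\<dots> = H_norm a u' / C"
      using \<open>A > 0\<close> by (simp add: C_def)
    finally show "C * H_norm a u \<le> H_norm a u'"
      using \<open>C > 0\<close> by (simp add: field_simps)
  qed
qed

end
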